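(* Let $X\sim P_X$ be a real-valued random variable, let $Z\sim\mathcal{N}(0,1)$ be independent of $X$, set $Y=X+Z$, and fix $a>0$. Define the measure $\mu$ on $\mathbb{R}$ by $\mu(\mathrm{d}x)=\exp\!\left((1-a)\frac{x^2}{2}\right)P_X(\sqrt{a}\,\mathrm{d}x)$, i.e. $\mu$ has density $x\mapsto \exp((1-a)x^2/2)$ with respect to the measure $A\mapsto P_X(\sqrt a A)$. Let $\phi$ and $\Phi$ be the standard Gaussian pdf and cdf, and $g(x)=\max(\Phi(x),1-\Phi(x))$ (so $g'(x)=\mathsf{sign}(x)\phi(x)$). Then $\mathsf{m}(X\mid Y=y)=ay$ for all $y\in\mathbb{R}$ if and only if for all $y\in\mathbb{R}$ $$0=\int_{-\infty}^{\infty}\mathsf{sign}(x-y)\,\phi(y-x)\,\mu(\mathrm{d}x)=\int_{-\infty}^{\infty}g'(x-y)\,\mu(\mathrm{d}x).$$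
   Context: The conditional median is $\mathsf{m}(X\mid Y=y)=F^{-1}_{X\mid Y=y}(1/2)$, where $F_{X\mid Y=y}$ is the conditional cdf of $X$ given $Y=y$ and $F^{-1}(p)=\inf\{x\in\mathbb{R}: p\le F(x)\}$. *)

theory Defs
  imports "HOL-Probability.Probability"
begin

text \<open>Conditional cdf of X given Y = y, where Y = X + Z with Z ~ N(0,1) independent of X
  and PX the law of X.  Since Y has an everywhere positive density, the (canonical, continuous
  in y) regular conditional distribution is given by Bayes' formula.\<close>
definition gauss_cond_cdf :: "real measure \<Rightarrow> real \<Rightarrow> real \<Rightarrow> real" where
  "gauss_cond_cdf PX y t =
     (\<integral>x. indicator {..t} x * std_normal_density (y - x) \<partial>PX) /
     (\<integral>x. std_normal_density (y - x) \<partial>PX)"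

definition gen_inverse :: "(real \<Rightarrow> real) \<Rightarrow> real \<Rightarrow> real" where
  "gen_inverse F p = Inf {x. p \<le> F x}"

definition gauss_cond_median :: "real measure \<Rightarrow> real \<Rightarrow> real" where
  "gauss_cond_median PX y = gen_inverse (gauss_cond_cdf PX y) (1/2)"

definition mu_meas :: "real measure \<Rightarrow> real \<Rightarrow> real measure" where
  "mu_meas PX a = density (distr PX borel (\<lambda>x. x / sqrt a)) (\<lambda>x. ennreal (exp ((1 - a) * x\<^sup>2 / 2)))"

text \<open>Standard Gaussian cdf, g(x) = max(Phi x, 1 - Phi x), and the stated derivative
  g'(x) = sign(x) phi(x) (with the convention g'(0) = 0).\<close>
definition std_normal_cdf :: "real \<Rightarrow> real" where
  "std_normal_cdf x = measure (density lborel std_normal_density) {..x}"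

definition g_fun :: "real \<Rightarrow> real" where
  "g_fun x = max (std_normal_cdf x) (1 - std_normal_cdf x)"

definition g_prime :: "real \<Rightarrow> real" where
  "g_prime x = sgn x * std_normal_density x"

end

theory Submission
  imports Defs
begin

text \<open>
  Let \<open>Q\<^sub>w\<close> be the posterior law of \<open>X\<close> given \<open>Y = w\<close>, with density
  \<open>\<phi>(w - x) / p(w)\<close> with respect to \<open>P\<^sub>X\<close>. After the substitution \<open>x = u / \<surd>a\<close>, the
  integral against \<open>\<mu>\<close> at \<open>y = \<surd>a w\<close> is a positive multiple of
  \<open>Q\<^sub>w(a w, \<infinity>) - Q\<^sub>w(-\<infinity>, a w)\<close>, so the right-hand side says that \<open>a w\<close> splits every
  \<open>Q\<^sub>w\<close> into two halves. If the conditional median is \<open>a w\<close> for all \<open>w\<close>, this follows by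
  letting \<open>w'\<close> tend to \<open>w\<close> from either side, as \<open>w \<mapsto> Q\<^sub>w(S)\<close> is continuous.
  Conversely, if \<open>a w\<close> splits \<open>Q\<^sub>w\<close> evenly but \<open>Q\<^sub>w(-\<infinity>, t] \<ge> 1/2\<close> for some
  \<open>t < a w\<close>, then \<open>Q\<^sub>w\<close> has no mass in \<open>(t, a w]\<close> and mass \<open>1/2\<close> on either side of
  this gap. The likelihood ratio \<open>\<phi>(w' - x) / \<phi>(w - x)\<close> is strictly decreasing in \<open>x\<close>
  for \<open>w' < w\<close>, so the posterior at \<open>w'\<close> puts strictly more mass on \<open>(-\<infinity>, t]\<close>
  than on \<open>(t, \<infinity>)\<close>, contradicting the balance at a point \<open>a w' \<in> (t, a w)\<close>.
\<close>

lemma std_normal_density_le_one: "std_normal_density x \<le> 1"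
proof -
  have "1 / sqrt (2 * pi) \<le> 1"
    using pi_gt3 by simp
  moreover have "exp (- x\<^sup>2 / 2) \<le> 1"
    by simp
  ultimately show ?thesis
    unfolding std_normal_density_def by (intro mult_le_one) auto
qed

lemma std_normal_density_shift:
  "std_normal_density (y' - x) = exp ((y' - y) * x + (y\<^sup>2 - y'\<^sup>2) / 2) * std_normal_density (y - x)"
proof -
  have "- (y' - x)\<^sup>2 / 2 = (y' - y) * x + (y\<^sup>2 - y'\<^sup>2) / 2 + - (y - x)\<^sup>2 / 2"
    by (simp add: power2_eq_square field_simps)
  then show ?thesis
    by (simp add: std_normal_density_def exp_add[symmetric])
qed

lemma (in real_distribution) gen_inverse_cdf_eq_iff:
  assumes "0 < p" "p < 1"
  shows "gen_inverse (cdf M) p = m \<longleftrightarrow> (\<forall>t<m. cdf M t < p) \<and> (\<forall>t>m. p \<le> cdf M t)"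
proof -
  define S where "S = {x. p \<le> cdf M x}"
  have up: "x \<in> S \<Longrightarrow> x \<le> x' \<Longrightarrow> x' \<in> S" for x x'
    unfolding S_def using cdf_nondecreasing by (auto intro: order_trans)
  obtain x where "p < cdf M x"
    using order_tendstoD(1)[OF cdf_lim_at_top_prob \<open>p < 1\<close>] by (auto simp: eventually_at_top_linorder)
  then have "S \<noteq> {}"
    unfolding S_def by (auto intro: less_imp_le)
  obtain b where b: "\<And>x. x \<le> b \<Longrightarrow> cdf M x < p"
    using order_tendstoD(2)[OF cdf_lim_at_bot \<open>0 < p\<close>] by (auto simp: eventually_at_bot_linorder)
  have "bdd_below S"
    by (rule bdd_belowI[of _ b]) (use b in \<open>force simp: S_def not_less[symmetric]\<close>)
  have "Inf S = m \<longleftrightarrow> (\<forall>t<m. t \<notin> S) \<and> (\<forall>t>m. t \<in> S)"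
  proof
    assume "Inf S = m"
    then show "(\<forall>t<m. t \<notin> S) \<and> (\<forall>t>m. t \<in> S)"
      using cInf_lower[OF _ \<open>bdd_below S\<close>] cInf_lessD[OF \<open>S \<noteq> {}\<close>] up
      by (metis less_le_not_le linorder_not_le)
  next
    assume m: "(\<forall>t<m. t \<notin> S) \<and> (\<forall>t>m. t \<in> S)"
    show "Inf S = m"
    proof (rule antisym)
      show "Inf S \<le> m"
        by (rule dense_ge) (use m cInf_lower[OF _ \<open>bdd_below S\<close>] in blast)
      show "m \<le> Inf S"
        by (rule cInf_greatest[OF \<open>S \<noteq> {}\<close>]) (use m in force)
    qed
  qed
  then show ?thesis
    unfolding gen_inverse_def S_def by (auto simp: not_le)
qed

lemma (in real_distribution) integral_sgn:
  "(\<integral>x. sgn (x - s) \<partial>M) = measure M {s<..} - measure M {..<s}"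
proof -
  have "(\<lambda>x. sgn (x - s)) = (\<lambda>x. indicator {s<..} x - indicator {..<s} x :: real)"
    by (auto simp: fun_eq_iff indicator_def sgn_if)
  moreover have "integrable M (indicator A :: real \<Rightarrow> real)" if "A \<in> sets borel" for A
    using that by (simp add: less_top[symmetric])
  ultimately show ?thesis
    by (simp add: Bochner_Integration.integral_diff)
qed

lemma (in real_distribution) measure_greaterThan_eq: "measure M {s<..} = 1 - cdf M s"
proof -
  have "UNIV - {..s} = {s<..}"
    by auto
  then show ?thesis
    using prob_compl[of "{..s}"] by (simp add: cdf_def)
qed

lemma mu_meas_kernel_identity:
  assumes "0 < a"
  shows "exp ((1 - a) * (u / sqrt a)\<^sup>2 / 2) * (sgn (u / sqrt a - sqrt a * w) * std_normal_density (sqrt a * w - u / sqrt a))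
    = exp ((1 - a) * w\<^sup>2 / 2) * (sgn (u - a * w) * std_normal_density (w - u))"
proof -
  define r where "r = sqrt a"
  have "r > 0" "a = r\<^sup>2"
    using assms by (auto simp: r_def)
  have "u / r - r * w = (u - a * w) / r"
    using \<open>r > 0\<close> \<open>a = r\<^sup>2\<close> by (simp add: field_simps power2_eq_square)
  then have sgn_eq: "sgn (u / r - r * w) = sgn (u - a * w)"
    using \<open>r > 0\<close> by (simp add: sgn_divide)
  have "(1 - a) * (u / r)\<^sup>2 / 2 + - (r * w - u / r)\<^sup>2 / 2 = (1 - a) * w\<^sup>2 / 2 + - (w - u)\<^sup>2 / 2"
    using \<open>r > 0\<close> \<open>a = r\<^sup>2\<close> by (simp add: field_simps power2_eq_square)
  then have "exp ((1 - a) * (u / r)\<^sup>2 / 2) * std_normal_density (r * w - u / r)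
      = exp ((1 - a) * w\<^sup>2 / 2) * std_normal_density (w - u)"
    unfolding std_normal_density_def by (simp add: exp_add[symmetric] mult.left_commute)
  then show ?thesis
    unfolding r_def[symmetric] sgn_eq by (simp add: mult.left_commute)
qed

definition marginal_density :: "real measure \<Rightarrow> real \<Rightarrow> real" where
  "marginal_density P y = (\<integral>x. std_normal_density (y - x) \<partial>P)"

definition posterior :: "real measure \<Rightarrow> real \<Rightarrow> real measure" where
  "posterior P y = density P (\<lambda>x. std_normal_density (y - x) / marginal_density P y)"

context real_distribution
begin

lemma integrable_indicator_kernel:
  assumes "S \<in> sets borel"
  shows "integrable M (\<lambda>x. indicator S x * std_normal_density (y - x))"
  by (rule integrable_const_bound[where B=1])
    (use assms in \<open>auto simp: indicator_def std_normal_density_le_one\<close>)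

lemma marginal_density_pos: "0 < marginal_density M y"
proof -
  have int: "integrable M (\<lambda>x. std_normal_density (y - x))"
    using integrable_indicator_kernel[of UNIV] by simp
  have "\<not> (AE x in M. std_normal_density (y - x) = 0)"
    by (simp add: normal_density_pos less_imp_neq[symmetric])
  then have "marginal_density M y \<noteq> 0"
    unfolding marginal_density_def by (subst integral_nonneg_eq_0_iff_AE[OF int]) auto
  moreover have "0 \<le> marginal_density M y"
    unfolding marginal_density_def by simp
  ultimately show ?thesis
    by simp
qed

lemma real_distribution_posterior: "real_distribution (posterior M y)"
proof -
  have "(\<integral>\<^sup>+x. ennreal (std_normal_density (y - x) / marginal_density M y) \<partial>M)
      = ennreal ((\<integral>x. std_normal_density (y - x) \<partial>M) / marginal_density M y)"
    using integrable_indicator_kernel[of UNIV y] marginal_density_pos[of y]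
    by (subst nn_integral_eq_integral) auto
  then have "emeasure (posterior M y) (space (posterior M y)) = 1"
    using marginal_density_pos[of y]
    by (simp add: posterior_def emeasure_density marginal_density_def)
  then show ?thesis
    unfolding real_distribution_def real_distribution_axioms_def
    by (auto intro: prob_spaceI simp: posterior_def)
qed

lemma integral_posterior:
  assumes "f \<in> borel_measurable borel"
  shows "(\<integral>x. f x \<partial>posterior M y) = (\<integral>x. f x * std_normal_density (y - x) \<partial>M) / marginal_density M y"
  unfolding posterior_def using assms marginal_density_pos[of y]
  by (subst integral_density) (auto simp: mult.commute)

lemma measure_posterior:
  assumes "S \<in> sets borel"
  shows "marginal_density M y * measure (posterior M y) S = (\<integral>x. indicator S x * std_normal_density (y - x) \<partial>M)"
proof -
  interpret Q: real_distribution "posterior M y"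
    by (rule real_distribution_posterior)
  show ?thesis
    using integral_posterior[of "indicator S" y] assms marginal_density_pos[of y] by simp
qed

lemma cdf_posterior: "gauss_cond_cdf M y = cdf (posterior M y)"
  using measure_posterior[of "{..t}" y for t] marginal_density_pos[of y]
  by (auto simp: fun_eq_iff gauss_cond_cdf_def cdf_def marginal_density_def field_simps)

lemma gauss_cond_median_eq_iff:
  "gauss_cond_median M y = m \<longleftrightarrow>
     (\<forall>t<m. cdf (posterior M y) t < 1/2) \<and> (\<forall>t>m. 1/2 \<le> cdf (posterior M y) t)"
  unfolding gauss_cond_median_def cdf_posterior
  by (rule real_distribution.gen_inverse_cdf_eq_iff[OF real_distribution_posterior]) auto

lemma isCont_kernel_integral:
  assumes "S \<in> sets borel"
  shows "isCont (\<lambda>y. \<integral>x. indicator S x * std_normal_density (y - x) \<partial>M) y0"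
proof (rule continuous_at_sequentiallyI)
  fix u assume u: "u \<longlonglongrightarrow> y0"
  have "(\<lambda>n. std_normal_density (u n - x)) \<longlonglongrightarrow> std_normal_density (y0 - x)" for x
    unfolding normal_density_def by (intro tendsto_intros u) auto
  then show "(\<lambda>n. \<integral>x. indicator S x * std_normal_density (u n - x) \<partial>M)
      \<longlonglongrightarrow> (\<integral>x. indicator S x * std_normal_density (y0 - x) \<partial>M)"
    using assms
    by (intro integral_dominated_convergence[where w="\<lambda>_. 1"])
      (auto intro!: tendsto_intros simp: indicator_def std_normal_density_le_one)
qed

lemma isCont_measure_posterior:
  assumes "S \<in> sets borel"
  shows "isCont (\<lambda>y. measure (posterior M y) S) y0"
proof -
  have "(\<lambda>y. measure (posterior M y) S) =
      (\<lambda>y. (\<integral>x. indicator S x * std_normal_density (y - x) \<partial>M) / marginal_density M y)"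
    using measure_posterior[OF assms] marginal_density_pos
    by (auto simp: fun_eq_iff eq_divide_eq mult.commute less_imp_neq[symmetric])
  moreover have "isCont (marginal_density M) y0"
    using isCont_kernel_integral[of UNIV y0] by (simp add: marginal_density_def[abs_def])
  ultimately show ?thesis
    using marginal_density_pos[of y0] isCont_kernel_integral[OF assms]
    by (auto intro!: continuous_intros)
qed

lemma posterior_shift_le:
  assumes "y' \<le> y" "S \<in> sets borel" "S \<subseteq> {t..}"
  shows "marginal_density M y' * measure (posterior M y') S
    \<le> exp ((y' - y) * t + (y\<^sup>2 - y'\<^sup>2) / 2) * (marginal_density M y * measure (posterior M y) S)"
proof -
  let ?c = "exp ((y' - y) * t + (y\<^sup>2 - y'\<^sup>2) / 2)"
  have "indicator S x * std_normal_density (y' - x) \<le> ?c * (indicator S x * std_normal_density (y - x))" for x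
  proof (cases "x \<in> S")
    case True
    then have "(y' - y) * x \<le> (y' - y) * t"
      using assms by (auto intro: mult_left_mono_neg)
    then show ?thesis
      using True by (simp add: std_normal_density_shift[of y' x y] mult_right_mono)
  qed simp
  then show ?thesis
    unfolding measure_posterior[OF assms(2)] integral_mult_right_zero[symmetric]
    using assms(2) by (intro integral_mono integrable_indicator_kernel integrable_mult_right)
qed

lemma posterior_shift_ge:
  assumes "y' \<le> y" "S \<in> sets borel" "S \<subseteq> {..t}"
  shows "exp ((y' - y) * t + (y\<^sup>2 - y'\<^sup>2) / 2) * (marginal_density M y * measure (posterior M y) S)
    \<le> marginal_density M y' * measure (posterior M y') S"
proof -
  let ?c = "exp ((y' - y) * t + (y\<^sup>2 - y'\<^sup>2) / 2)"
  have "?c * (indicator S x * std_normal_density (y - x)) \<le> indicator S x * std_normal_density (y' - x)" for x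
  proof (cases "x \<in> S")
    case True
    then have "(y' - y) * t \<le> (y' - y) * x"
      using assms by (auto intro: mult_left_mono_neg)
    then show ?thesis
      using True by (simp add: std_normal_density_shift[of y' x y] mult_right_mono)
  qed simp
  then show ?thesis
    unfolding measure_posterior[OF assms(2)] integral_mult_right_zero[symmetric]
    using assms(2) by (intro integral_mono integrable_indicator_kernel integrable_mult_right)
qed

lemma posterior_mass_moves_down:
  assumes "y' < y" "t < s"
    and gap: "measure (posterior M y) {t<..s} = 0"
    and tails: "measure (posterior M y) {s<..} = measure (posterior M y) {..t}"
    and pos: "0 < measure (posterior M y) {..t}"
  shows "measure (posterior M y') {t<..} < measure (posterior M y') {..t}"
proof -
  interpret Q': real_distribution "posterior M y'"
    by (rule real_distribution_posterior)
  define r where "r x = exp ((y' - y) * x + (y\<^sup>2 - y'\<^sup>2) / 2)" for x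
  define Z Z' where "Z = marginal_density M y" and "Z' = marginal_density M y'"
  define m where "m = measure (posterior M y) {..t}"
  have "Z > 0" "Z' > 0"
    unfolding Z_def Z'_def by (simp_all add: marginal_density_pos)
  have "Z' * measure (posterior M y') {t<..s} \<le> r t * (Z * 0)"
    using posterior_shift_le[of y' y "{t<..s}" t] \<open>y' < y\<close> gap
    by (simp add: r_def Z_def Z'_def subset_eq)
  then have gap': "measure (posterior M y') {t<..s} = 0"
    using \<open>Z' > 0\<close> by (simp add: mult_le_0_iff antisym)
  have "Z' * measure (posterior M y') {s<..} \<le> r s * (Z * m)"
    using posterior_shift_le[of y' y "{s<..}" s] \<open>y' < y\<close> tails
    by (simp add: r_def Z_def Z'_def m_def subset_eq)
  also have "\<dots> < r t * (Z * m)"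
    using \<open>y' < y\<close> \<open>t < s\<close> \<open>Z > 0\<close> pos by (simp add: r_def m_def mult_strict_left_mono_neg)
  also have "\<dots> \<le> Z' * measure (posterior M y') {..t}"
    using posterior_shift_ge[of y' y "{..t}" t] \<open>y' < y\<close> by (simp add: r_def Z_def Z'_def m_def)
  finally have "measure (posterior M y') {s<..} < measure (posterior M y') {..t}"
    using \<open>Z' > 0\<close> by simp
  moreover have "measure (posterior M y') {t<..} =
      measure (posterior M y') {t<..s} + measure (posterior M y') {s<..}"
    using \<open>t < s\<close> by (subst Q'.finite_measure_Union[symmetric])
      (auto intro: arg_cong[where f="measure _"])
  ultimately show ?thesis
    using gap' by simp
qed

lemma balanced_imp_gauss_cond_median:
  assumes "0 < a"
    and balanced: "\<And>y. measure (posterior M y) {a * y<..} = measure (posterior M y) {..<a * y}"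
  shows "gauss_cond_median M y = a * y"
proof -
  interpret Q: real_distribution "posterior M y"
    by (rule real_distribution_posterior)
  define s where "s = a * y"
  have tail: "measure (posterior M y) {s<..} = 1 - cdf (posterior M y) s"
    by (rule Q.measure_greaterThan_eq)
  have "measure (posterior M y) {..<s} \<le> cdf (posterior M y) s"
    unfolding cdf_def by (rule Q.finite_measure_mono) auto
  then have half: "1/2 \<le> cdf (posterior M y) s"
    using balanced[of y] tail by (simp add: s_def)
  have "cdf (posterior M y) t < 1/2" if "t < s" for t
  proof (rule ccontr)
    assume "\<not> ?thesis"
    moreover have "cdf (posterior M y) t \<le> measure (posterior M y) {..<s}"
      unfolding cdf_def using that by (intro Q.finite_measure_mono) auto
    ultimately have cdf_t: "cdf (posterior M y) t = 1/2" and cdf_s: "cdf (posterior M y) s = 1/2"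
      using balanced[of y] tail half Q.cdf_nondecreasing[of t s] that by (simp_all add: s_def)
    define y' where "y' = (t / a + y) / 2"
    have "y' < y" "t < a * y'" "a * y' < s"
      using that \<open>0 < a\<close> by (simp_all add: y'_def s_def field_simps)
    interpret Q': real_distribution "posterior M y'"
      by (rule real_distribution_posterior)
    have "measure (posterior M y') {t<..} < measure (posterior M y') {..t}"
    proof (rule posterior_mass_moves_down[OF \<open>y' < y\<close> that])
      show "measure (posterior M y) {t<..s} = 0"
        using Q.cdf_diff_eq[OF that] cdf_t cdf_s by simp
      show "measure (posterior M y) {s<..} = measure (posterior M y) {..t}"
        using tail cdf_t cdf_s by (simp add: cdf_def)
      show "0 < measure (posterior M y) {..t}"
        using cdf_t by (simp add: cdf_def)
    qed
    moreover have "measure (posterior M y') {a * y'<..} \<le> measure (posterior M y') {t<..}"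
      using \<open>t < a * y'\<close> by (intro Q'.finite_measure_mono) auto
    moreover have "measure (posterior M y') {..t} \<le> measure (posterior M y') {..<a * y'}"
      using \<open>t < a * y'\<close> by (intro Q'.finite_measure_mono) auto
    ultimately show False
      using balanced[of y'] by simp
  qed
  moreover have "1/2 \<le> cdf (posterior M y) t" if "s < t" for t
    using half Q.cdf_nondecreasing[of s t] that by simp
  ultimately show ?thesis
    unfolding gauss_cond_median_eq_iff s_def by blast
qed

lemma gauss_cond_median_imp_balanced:
  assumes "0 < a" and median: "\<And>y. gauss_cond_median M y = a * y"
  shows "measure (posterior M y0) {a * y0<..} = measure (posterior M y0) {..<a * y0}"
proof -
  define s where "s = a * y0"
  have below: "cdf (posterior M y) t < 1/2" if "t < a * y" for y t
    using median[of y] that unfolding gauss_cond_median_eq_iff by blast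
  have above: "1/2 \<le> cdf (posterior M y) t" if "a * y < t" for y t
    using median[of y] that unfolding gauss_cond_median_eq_iff by blast
  have "1/2 \<le> measure (posterior M y0) {s<..}"
  proof (rule tendsto_le[OF trivial_limit_at_right_real])
    show "((\<lambda>y. measure (posterior M y) {s<..}) \<longlongrightarrow> measure (posterior M y0) {s<..}) (at_right y0)"
      using isCont_measure_posterior[of "{s<..}" y0] by (simp add: isCont_def filterlim_at_split)
    have "1/2 \<le> measure (posterior M y) {s<..}" if "y0 < y" for y
      using below[of s y] that \<open>0 < a\<close> by (simp add: s_def real_distribution.measure_greaterThan_eq[OF real_distribution_posterior])
    then show "\<forall>\<^sub>F y in at_right y0. 1/2 \<le> measure (posterior M y) {s<..}"
      by (intro eventually_at_rightI[of y0 "y0 + 1"]) auto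
  qed simp
  moreover have "1/2 \<le> measure (posterior M y0) {..<s}"
  proof (rule tendsto_le[OF trivial_limit_at_left_real])
    show "((\<lambda>y. measure (posterior M y) {..<s}) \<longlongrightarrow> measure (posterior M y0) {..<s}) (at_left y0)"
      using isCont_measure_posterior[of "{..<s}" y0] by (simp add: isCont_def filterlim_at_split)
    have "1/2 \<le> measure (posterior M y) {..<s}" if "y < y0" for y
    proof -
      interpret Q: real_distribution "posterior M y"
        by (rule real_distribution_posterior)
      define t where "t = (a * y + s) / 2"
      have "a * y < t" "t < s"
        using that \<open>0 < a\<close> by (simp_all add: t_def s_def field_simps)
      then have "cdf (posterior M y) t \<le> measure (posterior M y) {..<s}"
        unfolding cdf_def by (intro Q.finite_measure_mono) auto
      then show ?thesis
        using above[OF \<open>a * y < t\<close>] by simp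
    qed
    then show "\<forall>\<^sub>F y in at_left y0. 1/2 \<le> measure (posterior M y) {..<s}"
      by (intro eventually_at_leftI[of "y0 - 1" y0]) auto
  qed simp
  moreover have "measure (posterior M y0) {..<s} + measure (posterior M y0) {s<..} \<le> 1"
  proof -
    interpret Q: real_distribution "posterior M y0"
      by (rule real_distribution_posterior)
    show ?thesis
      by (subst Q.finite_measure_Union[symmetric]) auto
  qed
  ultimately show ?thesis
    by (simp add: s_def)
qed

lemma integral_mu_meas_sgn_kernel:
  assumes "0 < a"
  shows "(\<integral>x. sgn (x - sqrt a * w) * std_normal_density (sqrt a * w - x) \<partial>mu_meas M a)
    = exp ((1 - a) * w\<^sup>2 / 2) * marginal_density M w
      * (measure (posterior M w) {a * w<..} - measure (posterior M w) {..<a * w})"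
proof -
  interpret Q: real_distribution "posterior M w"
    by (rule real_distribution_posterior)
  let ?f = "\<lambda>x. sgn (x - sqrt a * w) * std_normal_density (sqrt a * w - x)"
  have [measurable]: "?f \<in> borel_measurable borel"
    by measurable
  have "(\<integral>x. ?f x \<partial>mu_meas M a) = (\<integral>x. exp ((1 - a) * x\<^sup>2 / 2) * ?f x \<partial>distr M borel (\<lambda>x. x / sqrt a))"
    unfolding mu_meas_def by (subst integral_density) auto
  also have "\<dots> = (\<integral>u. exp ((1 - a) * (u / sqrt a)\<^sup>2 / 2) * ?f (u / sqrt a) \<partial>M)"
    by (subst integral_distr) auto
  also have "\<dots> = (\<integral>u. exp ((1 - a) * w\<^sup>2 / 2) * (sgn (u - a * w) * std_normal_density (w - u)) \<partial>M)"
    using assms by (intro Bochner_Integration.integral_cong refl) (rule mu_meas_kernel_identity)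
  also have "\<dots> = exp ((1 - a) * w\<^sup>2 / 2) * marginal_density M w * (\<integral>u. sgn (u - a * w) \<partial>posterior M w)"
    using marginal_density_pos[of w] by (simp add: integral_posterior)
  finally show ?thesis
    by (simp add: Q.integral_sgn)
qed

lemma integral_mu_meas_vanishes_iff_balanced:
  assumes "0 < a"
  shows "(\<forall>y. 0 = (\<integral>x. sgn (x - y) * std_normal_density (y - x) \<partial>mu_meas M a)) \<longleftrightarrow>
    (\<forall>w. measure (posterior M w) {a * w<..} = measure (posterior M w) {..<a * w})"
proof -
  let ?I = "\<lambda>y. \<integral>x. sgn (x - y) * std_normal_density (y - x) \<partial>mu_meas M a"
  have "(\<forall>y. 0 = ?I y) \<longleftrightarrow> (\<forall>w. 0 = ?I (sqrt a * w))"
  proof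
    assume "\<forall>w. 0 = ?I (sqrt a * w)"
    moreover have "sqrt a * (y / sqrt a) = y" for y
      using assms by simp
    ultimately show "\<forall>y. 0 = ?I y"
      by metis
  qed simp
  moreover have "marginal_density M w \<noteq> 0" for w
    using marginal_density_pos[of w] by simp
  ultimately show ?thesis
    using integral_mu_meas_sgn_kernel[OF assms] by simp
qed

end

theorem proposition5:
  fixes M :: "'s measure" and X Z :: "'s \<Rightarrow> real" and a :: real
  assumes "prob_space M"
    and "X \<in> borel_measurable M" and "Z \<in> borel_measurable M"
    and "distributed M lborel Z std_normal_density"
    and "prob_space.indep_var M borel X borel Z"
    and "a > 0"
  shows "(\<forall>y::real. gauss_cond_median (distr M borel X) y = a * y) \<longleftrightarrow>
         (\<forall>y::real.
            0 = (\<integral>x. sgn (x - y) * std_normal_density (y - x) \<partial>(mu_meas (distr M borel X) a)) \<and>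
            (\<integral>x. sgn (x - y) * std_normal_density (y - x) \<partial>(mu_meas (distr M borel X) a)) =
            (\<integral>x. g_prime (x - y) \<partial>(mu_meas (distr M borel X) a)))"
proof -
  \<comment> \<open>Only the law of \<open>X\<close> matters: \<open>gauss_cond_cdf\<close> is defined by Bayes' formula.\<close>
  interpret P: real_distribution "distr M borel X"
    using assms(1,2) by (simp add: prob_space.real_distribution_distr)
  have "(\<forall>y. gauss_cond_median (distr M borel X) y = a * y) \<longleftrightarrow>
      (\<forall>w. measure (posterior (distr M borel X) w) {a * w<..} =
        measure (posterior (distr M borel X) w) {..<a * w})"
    using P.balanced_imp_gauss_cond_median P.gauss_cond_median_imp_balanced \<open>a > 0\<close> by blast
  moreover have "sgn (x - y) * std_normal_density (y - x) = g_prime (x - y)" for x y :: real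
    by (simp add: g_prime_def std_normal_density_def power2_commute)
  ultimately show ?thesis
    using P.integral_mu_meas_vanishes_iff_balanced[OF \<open>a > 0\<close>] by simp
qed

end
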